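(* Let $\Lambda$ be a normal two-sorted term-modal logic and let $\Gamma$ be a $\Lambda$-consistent set of formulas of $\mathcal L$. Then there exists a $\Lambda$-consistent set $\Gamma_+$ of formulas of $\mathcal L^+$ with the $\forall$-property such that $\Gamma\subseteq\Gamma_+$.
   Context: Fix a finite nonempty set of agents $\mathcal A$ with $n=|\mathcal A|$ and two sorts $agt$, $obj$. The language $\mathcal L$ has countably infinite sets $VAR_{agt}$, $VAR_{obj}$ of variables, countable (possibly empty) sets of sorted constants, sorted function symbols (arity $\alpha\in\{agt,obj\}^{k+1}$) and sorted relation symbols (arity $\beta\in\{agt,obj\}^k$, $k\ge1$), $=$, $\neg,\to,\forall$, and operators $K_t$ for agent-sorted terms $t$; formulas: $t_1=t_2$, sort-correct $P(t_1,\dots,t_k)$, $\neg\varphi$, $\varphi\to\psi$, $\forall x\varphi$, $K_t\varphi$. Free variables as usual, those of $K_t\varphi$ being those of $t$ and $\varphi$; $\varphi(y/x)$ is substitution of $y$ for free occurrences of $x$. $\mathcal L^+$ is the language obtained from $\mathcal L$ by adding countably infinitely many new variables of each sort. A normal two-sorted term-modal logic $\Lambda$ (over $\mathcal L^+$) is a set of formulas containing: all substitution instances of valid formulas of propositional modal logic; ($\forall$) $\forall x\varphi\to\varphi(y/x)$ for $y$ a variable free in $\varphi$; (Id) $t=t$; (MSD) $x\neq y$ for $x$ agent-sorted, $y$ object-sorted variables; (PS) $(x=y)\to(\varphi(x)\to\varphi(y))$; ($\exists$Id) $(c=c)\to\exists x(x=c)$ for constants $c$; (N) $\exists x_1\cdots\exists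 x_n(x_1\neq x_2\wedge\dots\wedge x_{n-1}\neq x_n\wedge\forall y(y=x_1\vee\dots\vee y=x_n))$ for agent variables; (K) $K_t(\varphi\to\psi)\to(K_t\varphi\to K_t\psi)$; (BF) $\forall xK_t\varphi\to K_t\forall x\varphi$, $x\neq t$; (KNI) $(x\neq y)\to K_t(x\neq y)$; and closed under modus ponens, (KG) from $\varphi$ infer $K_t\varphi$, and (Gen) from $\varphi\to\psi$ infer $\varphi\to\forall x\psi$ when $x$ is not free in $\varphi$. $\Gamma\vdash_\Lambda\varphi$ iff $\bigwedge\Gamma_0\to\varphi\in\Lambda$ for some finite $\Gamma_0\subseteq\Gamma$; $\Gamma$ is $\Lambda$-consistent iff $\Gamma\not\vdash_\Lambda\varphi\wedge\neg\varphi$ for every formula $\varphi$. A set $\Gamma$ has the $\forall$-property if for every formula $\varphi$ and every variable $x$ there is a variable $y$ with $(\varphi(y/x)\to\forall x\varphi)\in\Gamma$. *)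

theory Defs
  imports Main "HOL-Library.Countable"
begin

section \<open>Syntax of two-sorted term-modal logic\<close>

datatype sort = Agt | Obj

text \<open>The variables of the base language L
  are those with even index; L+ has all variables (the odd-indexed ones are the
  countably infinitely many new variables of each sort).\<close>
datatype var = Var sort nat

fun vsort :: "var \<Rightarrow> sort" where
  "vsort (Var s _) = s"

definition Lvar :: "var \<Rightarrow> bool" where
  "Lvar v \<longleftrightarrow> (\<exists>s k. v = Var s (2 * k))"

datatype ('c, 'f) trm = TV var | TC 'c | TF 'f "('c, 'f) trm list"

datatype ('c, 'f, 'r) fm =
    Eq "('c, 'f) trm" "('c, 'f) trm"
  | Pred 'r "('c, 'f) trm list"
  | Neg "('c, 'f, 'r) fm"
  | Imp "('c, 'f, 'r) fm" "('c, 'f, 'r) fm"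
  | All var "('c, 'f, 'r) fm"
  | K "('c, 'f) trm" "('c, 'f, 'r) fm"

text \<open>Signature: cs c = Some s iff c is a constant of sort s; fs f = Some (args, res);
  rs r = Some args.  None means the symbol is not part of the language, so each set of
  symbols may be empty.\<close>

fun wt :: "('c \<Rightarrow> sort option) \<Rightarrow> ('f \<Rightarrow> (sort list \<times> sort) option)
           \<Rightarrow> ('c, 'f) trm \<Rightarrow> sort \<Rightarrow> bool"
and wts :: "('c \<Rightarrow> sort option) \<Rightarrow> ('f \<Rightarrow> (sort list \<times> sort) option)
           \<Rightarrow> ('c, 'f) trm list \<Rightarrow> sort list \<Rightarrow> bool" where
  "wt cs fs (TV v) s = (vsort v = s)"
| "wt cs fs (TC c) s = (cs c = Some s)"
| "wt cs fs (TF f ts) s =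
     (case fs f of None \<Rightarrow> False | Some (as, r) \<Rightarrow> r = s \<and> wts cs fs ts as)"
| "wts cs fs [] ss = (ss = [])"
| "wts cs fs (t # ts) ss =
     (case ss of [] \<Rightarrow> False | s # ss' \<Rightarrow> wt cs fs t s \<and> wts cs fs ts ss')"

fun fvt :: "('c, 'f) trm \<Rightarrow> var set" where
  "fvt (TV v) = {v}"
| "fvt (TC c) = {}"
| "fvt (TF f ts) = (\<Union>t\<in>set ts. fvt t)"

fun substt :: "var \<Rightarrow> var \<Rightarrow> ('c, 'f) trm \<Rightarrow> ('c, 'f) trm" where
  "substt y x (TV v) = TV (if v = x then y else v)"
| "substt y x (TC c) = TC c"
| "substt y x (TF f ts) = TF f (map (substt y x) ts)"

fun wf :: "('c \<Rightarrow> sort option) \<Rightarrow> ('f \<Rightarrow> (sort list \<times> sort) option)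
           \<Rightarrow> ('r \<Rightarrow> sort list option) \<Rightarrow> ('c, 'f, 'r) fm \<Rightarrow> bool" where
  "wf cs fs rs (Eq a b) = ((\<exists>s. wt cs fs a s) \<and> (\<exists>s. wt cs fs b s))"
| "wf cs fs rs (Pred r ts) = (case rs r of None \<Rightarrow> False | Some as \<Rightarrow> wts cs fs ts as)"
| "wf cs fs rs (Neg \<phi>) = wf cs fs rs \<phi>"
| "wf cs fs rs (Imp \<phi> \<psi>) = (wf cs fs rs \<phi> \<and> wf cs fs rs \<psi>)"
| "wf cs fs rs (All x \<phi>) = wf cs fs rs \<phi>"
| "wf cs fs rs (K t \<phi>) = (wt cs fs t Agt \<and> wf cs fs rs \<phi>)"

fun fv :: "('c, 'f, 'r) fm \<Rightarrow> var set" where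
  "fv (Eq a b) = fvt a \<union> fvt b"
| "fv (Pred r ts) = (\<Union>t\<in>set ts. fvt t)"
| "fv (Neg \<phi>) = fv \<phi>"
| "fv (Imp \<phi> \<psi>) = fv \<phi> \<union> fv \<psi>"
| "fv (All x \<phi>) = fv \<phi> - {x}"
| "fv (K t \<phi>) = fvt t \<union> fv \<phi>"

fun vars :: "('c, 'f, 'r) fm \<Rightarrow> var set" where
  "vars (Eq a b) = fvt a \<union> fvt b"
| "vars (Pred r ts) = (\<Union>t\<in>set ts. fvt t)"
| "vars (Neg \<phi>) = vars \<phi>"
| "vars (Imp \<phi> \<psi>) = vars \<phi> \<union> vars \<psi>"
| "vars (All x \<phi>) = insert x (vars \<phi>)"
| "vars (K t \<phi>) = fvt t \<union> vars \<phi>"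

fun subst :: "var \<Rightarrow> var \<Rightarrow> ('c, 'f, 'r) fm \<Rightarrow> ('c, 'f, 'r) fm" where
  "subst y x (Eq a b) = Eq (substt y x a) (substt y x b)"
| "subst y x (Pred r ts) = Pred r (map (substt y x) ts)"
| "subst y x (Neg \<phi>) = Neg (subst y x \<phi>)"
| "subst y x (Imp \<phi> \<psi>) = Imp (subst y x \<phi>) (subst y x \<psi>)"
| "subst y x (All z \<phi>) = (if z = x then All z \<phi> else All z (subst y x \<phi>))"
| "subst y x (K t \<phi>) = K (substt y x t) (subst y x \<phi>)"

fun free_for :: "var \<Rightarrow> var \<Rightarrow> ('c, 'f, 'r) fm \<Rightarrow> bool" where
  "free_for y x (Eq a b) = True"
| "free_for y x (Pred r ts) = True"
| "free_for y x (Neg \<phi>) = free_for y x \<phi>"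
| "free_for y x (Imp \<phi> \<psi>) = (free_for y x \<phi> \<and> free_for y x \<psi>)"
| "free_for y x (All z \<phi>) = (x \<notin> fv (All z \<phi>) \<or> (z \<noteq> y \<and> free_for y x \<phi>))"
| "free_for y x (K t \<phi>) = free_for y x \<phi>"

definition And :: "('c, 'f, 'r) fm \<Rightarrow> ('c, 'f, 'r) fm \<Rightarrow> ('c, 'f, 'r) fm" where
  "And \<phi> \<psi> = Neg (Imp \<phi> (Neg \<psi>))"

definition Or :: "('c, 'f, 'r) fm \<Rightarrow> ('c, 'f, 'r) fm \<Rightarrow> ('c, 'f, 'r) fm" where
  "Or \<phi> \<psi> = Imp (Neg \<phi>) \<psi>"

definition Ex :: "var \<Rightarrow> ('c, 'f, 'r) fm \<Rightarrow> ('c, 'f, 'r) fm" where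
  "Ex x \<phi> = Neg (All x (Neg \<phi>))"

fun Conj :: "('c, 'f, 'r) fm \<Rightarrow> ('c, 'f, 'r) fm list \<Rightarrow> ('c, 'f, 'r) fm" where
  "Conj \<phi> [] = \<phi>"
| "Conj \<phi> (\<psi> # \<psi>s) = And \<phi> (Conj \<psi> \<psi>s)"

fun Disj :: "('c, 'f, 'r) fm \<Rightarrow> ('c, 'f, 'r) fm list \<Rightarrow> ('c, 'f, 'r) fm" where
  "Disj \<phi> [] = \<phi>"
| "Disj \<phi> (\<psi> # \<psi>s) = Or \<phi> (Disj \<psi> \<psi>s)"

definition Exs :: "var list \<Rightarrow> ('c, 'f, 'r) fm \<Rightarrow> ('c, 'f, 'r) fm" where
  "Exs xs \<phi> = foldr Ex xs \<phi>"

definition NForm :: "var list \<Rightarrow> var \<Rightarrow> ('c, 'f, 'r) fm" where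
  "NForm xs y =
     (let ds = [Neg (Eq (TV (xs ! i)) (TV (xs ! j))). i \<leftarrow> [0..<length xs], j \<leftarrow> [Suc i..<length xs]];
          eqs = map (\<lambda>x. Eq (TV y) (TV x)) xs;
          cov = All y (Disj (hd eqs) (tl eqs));
          cl = ds @ [cov]
      in Exs xs (Conj (hd cl) (tl cl)))"

section \<open>Propositional modal logic (mono-modal K) and substitution instances\<close>

datatype pm = PA nat | PN pm | PI pm pm | PB pm

fun psem :: "(nat \<Rightarrow> nat \<Rightarrow> bool) \<Rightarrow> (nat \<Rightarrow> nat \<Rightarrow> bool) \<Rightarrow> nat \<Rightarrow> pm \<Rightarrow> bool" where
  "psem R V w (PA i) = V i w"
| "psem R V w (PN p) = (\<not> psem R V w p)"
| "psem R V w (PI p q) = (psem R V w p \<longrightarrow> psem R V w q)"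
| "psem R V w (PB p) = (\<forall>v. R w v \<longrightarrow> psem R V v p)"

definition pvalid :: "pm \<Rightarrow> bool" where
  "pvalid p \<longleftrightarrow> (\<forall>R V w. psem R V w p)"

fun inst :: "(nat \<Rightarrow> ('c, 'f, 'r) fm) \<Rightarrow> ('c, 'f) trm \<Rightarrow> pm \<Rightarrow> ('c, 'f, 'r) fm" where
  "inst \<sigma> t (PA i) = \<sigma> i"
| "inst \<sigma> t (PN p) = Neg (inst \<sigma> t p)"
| "inst \<sigma> t (PI p q) = Imp (inst \<sigma> t p) (inst \<sigma> t q)"
| "inst \<sigma> t (PB p) = K t (inst \<sigma> t p)"

section \<open>Normal two-sorted term-modal logics (over L+)\<close>

definition normal_logic ::
  "nat \<Rightarrow> ('c \<Rightarrow> sort option) \<Rightarrow> ('f \<Rightarrow> (sort list \<times> sort) option)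
   \<Rightarrow> ('r \<Rightarrow> sort list option) \<Rightarrow> ('c, 'f, 'r) fm set \<Rightarrow> bool" where
  "normal_logic n cs fs rs \<Lambda> \<longleftrightarrow>
     (\<forall>\<phi>\<in>\<Lambda>. wf cs fs rs \<phi>)
   \<and> (\<forall>p \<sigma> t. pvalid p \<and> (\<forall>i. wf cs fs rs (\<sigma> i)) \<and> wt cs fs t Agt \<longrightarrow> inst \<sigma> t p \<in> \<Lambda>)
   \<and> (\<forall>x y \<phi>. wf cs fs rs \<phi> \<and> vsort y = vsort x \<and> free_for y x \<phi>
        \<longrightarrow> Imp (All x \<phi>) (subst y x \<phi>) \<in> \<Lambda>)
   \<and> (\<forall>t s. wt cs fs t s \<longrightarrow> Eq t t \<in> \<Lambda>)
   \<and> (\<forall>x y. vsort x = Agt \<and> vsort y = Obj \<longrightarrow> Neg (Eq (TV x) (TV y)) \<in> \<Lambda>)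
   \<and> (\<forall>x y \<phi>. wf cs fs rs \<phi> \<and> vsort y = vsort x \<and> free_for y x \<phi>
        \<longrightarrow> Imp (Eq (TV x) (TV y)) (Imp \<phi> (subst y x \<phi>)) \<in> \<Lambda>)
   \<and> (\<forall>c s x. cs c = Some s \<and> vsort x = s
        \<longrightarrow> Imp (Eq (TC c) (TC c)) (Ex x (Eq (TV x) (TC c))) \<in> \<Lambda>)
   \<and> (\<forall>xs y. length xs = n \<and> distinct xs \<and> (\<forall>v\<in>set xs. vsort v = Agt)
        \<and> vsort y = Agt \<and> y \<notin> set xs \<longrightarrow> NForm xs y \<in> \<Lambda>)
   \<and> (\<forall>t \<phi> \<psi>. wt cs fs t Agt \<and> wf cs fs rs \<phi> \<and> wf cs fs rs \<psi>
        \<longrightarrow> Imp (K t (Imp \<phi> \<psi>)) (Imp (K t \<phi>) (K t \<psi>)) \<in> \<Lambda>)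
   \<and> (\<forall>x t \<phi>. wt cs fs t Agt \<and> wf cs fs rs \<phi> \<and> x \<notin> fvt t
        \<longrightarrow> Imp (All x (K t \<phi>)) (K t (All x \<phi>)) \<in> \<Lambda>)
   \<and> (\<forall>x y t. wt cs fs t Agt
        \<longrightarrow> Imp (Neg (Eq (TV x) (TV y))) (K t (Neg (Eq (TV x) (TV y)))) \<in> \<Lambda>)
   \<and> (\<forall>\<phi> \<psi>. Imp \<phi> \<psi> \<in> \<Lambda> \<and> \<phi> \<in> \<Lambda> \<longrightarrow> \<psi> \<in> \<Lambda>)
   \<and> (\<forall>\<phi> t. \<phi> \<in> \<Lambda> \<and> wt cs fs t Agt \<longrightarrow> K t \<phi> \<in> \<Lambda>)
   \<and> (\<forall>\<phi> \<psi> x. Imp \<phi> \<psi> \<in> \<Lambda> \<and> x \<notin> fv \<phi> \<longrightarrow> Imp \<phi> (All x \<psi>) \<in> \<Lambda>)"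

definition derives :: "('c, 'f, 'r) fm set \<Rightarrow> ('c, 'f, 'r) fm set \<Rightarrow> ('c, 'f, 'r) fm \<Rightarrow> bool" where
  "derives \<Lambda> \<Gamma> \<phi> \<longleftrightarrow>
     \<phi> \<in> \<Lambda> \<or> (\<exists>\<psi> \<psi>s. set (\<psi> # \<psi>s) \<subseteq> \<Gamma> \<and> Imp (Conj \<psi> \<psi>s) \<phi> \<in> \<Lambda>)"

definition consistent ::
  "('c \<Rightarrow> sort option) \<Rightarrow> ('f \<Rightarrow> (sort list \<times> sort) option) \<Rightarrow> ('r \<Rightarrow> sort list option)
   \<Rightarrow> ('c, 'f, 'r) fm set \<Rightarrow> ('c, 'f, 'r) fm set \<Rightarrow> bool" where
  "consistent cs fs rs \<Lambda> \<Gamma> \<longleftrightarrow>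
     (\<forall>\<phi>. wf cs fs rs \<phi> \<longrightarrow> \<not> derives \<Lambda> \<Gamma> (And \<phi> (Neg \<phi>)))"

definition forall_property ::
  "('c \<Rightarrow> sort option) \<Rightarrow> ('f \<Rightarrow> (sort list \<times> sort) option) \<Rightarrow> ('r \<Rightarrow> sort list option)
   \<Rightarrow> ('c, 'f, 'r) fm set \<Rightarrow> bool" where
  "forall_property cs fs rs \<Gamma> \<longleftrightarrow>
     (\<forall>\<phi> x. wf cs fs rs \<phi> \<longrightarrow>
        (\<exists>y. vsort y = vsort x \<and> Imp (subst y x \<phi>) (All x \<phi>) \<in> \<Gamma>))"

definition Lfm ::
  "('c \<Rightarrow> sort option) \<Rightarrow> ('f \<Rightarrow> (sort list \<times> sort) option) \<Rightarrow> ('r \<Rightarrow> sort list option)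
   \<Rightarrow> ('c, 'f, 'r) fm \<Rightarrow> bool" where
  "Lfm cs fs rs \<phi> \<longleftrightarrow> wf cs fs rs \<phi> \<and> (\<forall>v\<in>vars \<phi>. Lvar v)"

end

theory Submission
  imports Defs
begin

text \<open>Each Henkin axiom \<open>\<phi>(y/x) \<longrightarrow> \<forall>x \<phi>\<close> gets its own witness \<open>y\<close>: a new (odd-indexed)
  variable of the sort of \<open>x\<close>, whose index is an injective code of the pair \<open>(\<phi>, x)\<close> that
  exceeds the indices of all variables of \<open>\<phi>\<close> and \<open>x\<close>.  Adding one Henkin axiom whose witness
  is fresh for a consistent set \<open>\<Delta>\<close> keeps it consistent: by the deduction theorem a refutation
  would give \<open>\<Delta> \<turnstile> \<phi>(y/x)\<close> and \<open>\<Delta> \<turnstile> \<not>\<forall>x \<phi>\<close>, and generalising on \<open>y\<close> turns the first into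
  \<open>\<Delta> \<turnstile> \<forall>x \<phi>\<close>.  Adding the axioms in the order of their codes, each new witness is fresh for
  \<open>\<Gamma>\<close> and for all earlier axioms, so every stage is consistent, and hence so is their union.\<close>

instance sort :: countable by countable_datatype
instance var :: countable by countable_datatype
instance trm :: (countable, countable) countable by countable_datatype
instance fm :: (countable, countable, countable) countable by countable_datatype

section \<open>Substitution of variables\<close>

lemma wts_map_substt:
  assumes "\<And>t s. t \<in> set ts \<Longrightarrow> wt cs fs (substt y x t) s = wt cs fs t s"
  shows "wts cs fs (map (substt y x) ts) ss = wts cs fs ts ss"
  using assms by (induction ts arbitrary: ss) (auto split: list.splits)

lemma wt_substt:
  assumes "vsort y = vsort x"
  shows "wt cs fs (substt y x t) s = wt cs fs t s"
proof (induction t arbitrary: s)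
  case (TF f ts)
  then show ?case by (simp add: wts_map_substt split: option.splits)
qed (use assms in auto)

lemma wf_subst:
  assumes "vsort y = vsort x"
  shows "wf cs fs rs (subst y x \<phi>) = wf cs fs rs \<phi>"
  by (induction \<phi>)
    (auto simp: wt_substt[OF assms] wts_map_substt[OF wt_substt[OF assms]] split: option.splits)

lemma substt_id: "y \<notin> fvt t \<Longrightarrow> substt x y t = t"
  by (induction t) (auto simp: map_idI)

lemma subst_id: "y \<notin> vars \<phi> \<Longrightarrow> subst x y \<phi> = \<phi>"
  by (induction \<phi>) (auto simp: substt_id map_idI)

lemma substt_substt_inverse: "y \<notin> fvt t \<Longrightarrow> substt x y (substt y x t) = t"
  by (induction t) (auto simp: map_idI)

lemma subst_subst_inverse: "y \<notin> vars \<phi> \<Longrightarrow> y \<noteq> x \<Longrightarrow> subst x y (subst y x \<phi>) = \<phi>"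
  by (induction \<phi>) (auto simp: substt_substt_inverse map_idI subst_id)

lemma fv_subset_vars: "fv \<phi> \<subseteq> vars \<phi>"
  by (induction \<phi>) auto

lemma fvt_substt_eliminates: "y \<noteq> x \<Longrightarrow> x \<notin> fvt (substt y x t)"
  by (induction t) auto

lemma fv_subst_eliminates: "y \<noteq> x \<Longrightarrow> x \<notin> fv (subst y x \<phi>)"
  by (induction \<phi>) (auto simp: fvt_substt_eliminates)

lemma free_for_subst_inverse: "y \<notin> vars \<phi> \<Longrightarrow> y \<noteq> x \<Longrightarrow> free_for x y (subst y x \<phi>)"
proof (induction \<phi>)
  case (All z \<psi>)
  then show ?case
    using fv_subset_vars[of \<psi>] by (cases "z = x") auto
qed auto

lemma finite_fvt: "finite (fvt t)"
  by (induction t) auto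

lemma finite_vars: "finite (vars \<phi>)"
  by (induction \<phi>) (auto simp: finite_fvt)

lemma fvt_substt_subset: "fvt (substt y x t) \<subseteq> insert y (fvt t)"
  by (induction t) auto

lemma vars_subst_subset: "vars (subst y x \<phi>) \<subseteq> insert y (vars \<phi>)"
  by (induction \<phi>) (auto dest!: fvt_substt_subset[THEN subsetD])

lemma wf_And [simp]: "wf cs fs rs (And \<phi> \<psi>) = (wf cs fs rs \<phi> \<and> wf cs fs rs \<psi>)"
  by (simp add: And_def)

lemma wf_Conj: "wf cs fs rs (Conj \<phi> \<psi>s) = (wf cs fs rs \<phi> \<and> (\<forall>\<psi>\<in>set \<psi>s. wf cs fs rs \<psi>))"
  by (induction \<psi>s arbitrary: \<phi>) auto

lemma fv_Conj: "fv (Conj \<phi> \<psi>s) = fv \<phi> \<union> (\<Union>\<psi>\<in>set \<psi>s. fv \<psi>)"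
  by (induction \<psi>s arbitrary: \<phi>) (auto simp: And_def)

section \<open>Derived rules of a normal term-modal logic\<close>

definition atoms :: "'a list \<Rightarrow> nat \<Rightarrow> 'a" where
  "atoms as i = (if i < length as then as ! i else hd as)"

locale normal_tml =
  fixes n cs fs rs and \<Lambda> :: "('c::countable, 'f::countable, 'r::countable) fm set"
  assumes normal: "normal_logic n cs fs rs \<Lambda>"
begin

abbreviation wff :: "('c, 'f, 'r) fm \<Rightarrow> bool" where
  "wff \<equiv> wf cs fs rs"

lemma taut_inst: "pvalid p \<Longrightarrow> \<forall>i. wff (\<sigma> i) \<Longrightarrow> wt cs fs t Agt \<Longrightarrow> inst \<sigma> t p \<in> \<Lambda>"
  using normal unfolding normal_logic_def by (elim conjE) blast

text \<open>The agent term is arbitrary: the tautologies instantiated below contain no box.\<close>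

lemma taut_atoms:
  "pvalid p \<Longrightarrow> as \<noteq> [] \<Longrightarrow> \<forall>a\<in>set as. wff a \<Longrightarrow> inst (atoms as) (TV (Var Agt 0)) p \<in> \<Lambda>"
  by (rule taut_inst) (auto simp: atoms_def)

lemma mp:
  assumes "Imp \<phi> \<psi> \<in> \<Lambda>" "\<phi> \<in> \<Lambda>"
  shows "\<psi> \<in> \<Lambda>"
proof -
  have "\<forall>\<phi> \<psi>. Imp \<phi> \<psi> \<in> \<Lambda> \<and> \<phi> \<in> \<Lambda> \<longrightarrow> \<psi> \<in> \<Lambda>"
    using normal unfolding normal_logic_def by (elim conjE) assumption
  then show ?thesis using assms by blast
qed

lemma gen:
  assumes "Imp \<phi> \<psi> \<in> \<Lambda>" "x \<notin> fv \<phi>"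
  shows "Imp \<phi> (All x \<psi>) \<in> \<Lambda>"
proof -
  have "\<forall>\<phi> \<psi> x. Imp \<phi> \<psi> \<in> \<Lambda> \<and> x \<notin> fv \<phi> \<longrightarrow> Imp \<phi> (All x \<psi>) \<in> \<Lambda>"
    using normal unfolding normal_logic_def by (elim conjE) assumption
  then show ?thesis using assms by blast
qed

lemma all_inst:
  "wff \<phi> \<Longrightarrow> vsort y = vsort x \<Longrightarrow> free_for y x \<phi> \<Longrightarrow> Imp (All x \<phi>) (subst y x \<phi>) \<in> \<Lambda>"
  using normal unfolding normal_logic_def by (elim conjE) blast

lemma eq_refl: "wt cs fs t s \<Longrightarrow> Eq t t \<in> \<Lambda>"
  using normal unfolding normal_logic_def by (elim conjE) blast

lemma imp_weaken:
  assumes "wff \<phi>" "wff \<psi>" "\<psi> \<in> \<Lambda>"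
  shows "Imp \<phi> \<psi> \<in> \<Lambda>"
proof -
  have "inst (atoms [\<phi>, \<psi>]) (TV (Var Agt 0)) (PI (PA 1) (PI (PA 0) (PA 1))) \<in> \<Lambda>"
    by (rule taut_atoms) (auto simp: pvalid_def assms)
  then show ?thesis using assms mp by (simp add: atoms_def)
qed

lemma imp_refl:
  assumes "wff \<phi>"
  shows "Imp \<phi> \<phi> \<in> \<Lambda>"
proof -
  have "inst (atoms [\<phi>]) (TV (Var Agt 0)) (PI (PA 0) (PA 0)) \<in> \<Lambda>"
    by (rule taut_atoms) (auto simp: pvalid_def assms)
  then show ?thesis by (simp add: atoms_def)
qed

lemma imp_trans:
  assumes "wff \<phi>" "wff \<psi>" "wff \<chi>" "Imp \<phi> \<psi> \<in> \<Lambda>" "Imp \<psi> \<chi> \<in> \<Lambda>"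
  shows "Imp \<phi> \<chi> \<in> \<Lambda>"
proof -
  have "inst (atoms [\<phi>, \<psi>, \<chi>]) (TV (Var Agt 0))
      (PI (PI (PA 0) (PA 1)) (PI (PI (PA 1) (PA 2)) (PI (PA 0) (PA 2)))) \<in> \<Lambda>"
    by (rule taut_atoms) (auto simp: pvalid_def assms)
  then show ?thesis using assms by (simp add: atoms_def) (meson mp)
qed

lemma And_imp_left:
  assumes "wff \<phi>" "wff \<psi>"
  shows "Imp (And \<phi> \<psi>) \<phi> \<in> \<Lambda>"
proof -
  have "inst (atoms [\<phi>, \<psi>]) (TV (Var Agt 0)) (PI (PN (PI (PA 0) (PN (PA 1)))) (PA 0)) \<in> \<Lambda>"
    by (rule taut_atoms) (auto simp: pvalid_def assms)
  then show ?thesis by (simp add: atoms_def And_def)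
qed

lemma And_imp_right:
  assumes "wff \<phi>" "wff \<psi>"
  shows "Imp (And \<phi> \<psi>) \<psi> \<in> \<Lambda>"
proof -
  have "inst (atoms [\<phi>, \<psi>]) (TV (Var Agt 0)) (PI (PN (PI (PA 0) (PN (PA 1)))) (PA 1)) \<in> \<Lambda>"
    by (rule taut_atoms) (auto simp: pvalid_def assms)
  then show ?thesis by (simp add: atoms_def And_def)
qed

lemma imp_AndI:
  assumes "wff \<chi>" "wff \<phi>" "wff \<psi>" "Imp \<chi> \<phi> \<in> \<Lambda>" "Imp \<chi> \<psi> \<in> \<Lambda>"
  shows "Imp \<chi> (And \<phi> \<psi>) \<in> \<Lambda>"
proof -
  have "inst (atoms [\<chi>, \<phi>, \<psi>]) (TV (Var Agt 0)) (PI (PI (PA 0) (PA 1)) (PI (PI (PA 0) (PA 2))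
          (PI (PA 0) (PN (PI (PA 1) (PN (PA 2))))))) \<in> \<Lambda>"
    by (rule taut_atoms) (auto simp: pvalid_def assms)
  then show ?thesis using assms by (simp add: atoms_def And_def) (meson mp)
qed

lemma And_imp_curry:
  assumes "wff \<phi>" "wff \<psi>" "wff \<chi>" "Imp (And \<phi> \<psi>) \<chi> \<in> \<Lambda>"
  shows "Imp \<psi> (Imp \<phi> \<chi>) \<in> \<Lambda>"
proof -
  have "inst (atoms [\<phi>, \<psi>, \<chi>]) (TV (Var Agt 0))
      (PI (PI (PN (PI (PA 0) (PN (PA 1)))) (PA 2)) (PI (PA 1) (PI (PA 0) (PA 2)))) \<in> \<Lambda>"
    by (rule taut_atoms) (auto simp: pvalid_def assms)
  then show ?thesis using assms mp by (simp add: atoms_def And_def)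
qed

lemma refutes_imp_premise:
  assumes "wff \<chi>" "wff \<phi>" "wff \<psi>" "wff \<theta>"
    and "Imp \<chi> (Imp (Imp \<phi> \<psi>) (And \<theta> (Neg \<theta>))) \<in> \<Lambda>"
  shows "Imp \<chi> \<phi> \<in> \<Lambda>"
proof -
  have "inst (atoms [\<chi>, \<phi>, \<psi>, \<theta>]) (TV (Var Agt 0))
      (PI (PI (PA 0) (PI (PI (PA 1) (PA 2)) (PN (PI (PA 3) (PN (PN (PA 3)))))))
          (PI (PA 0) (PA 1))) \<in> \<Lambda>"
    by (rule taut_atoms) (auto simp: pvalid_def assms)
  then show ?thesis using assms mp by (simp add: atoms_def And_def)
qed

lemma refutes_imp_conclusion:
  assumes "wff \<chi>" "wff \<phi>" "wff \<psi>" "wff \<theta>"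
    and "Imp \<chi> (Imp (Imp \<phi> \<psi>) (And \<theta> (Neg \<theta>))) \<in> \<Lambda>"
  shows "Imp \<chi> (Neg \<psi>) \<in> \<Lambda>"
proof -
  have "inst (atoms [\<chi>, \<phi>, \<psi>, \<theta>]) (TV (Var Agt 0))
      (PI (PI (PA 0) (PI (PI (PA 1) (PA 2)) (PN (PI (PA 3) (PN (PN (PA 3)))))))
          (PI (PA 0) (PN (PA 2)))) \<in> \<Lambda>"
    by (rule taut_atoms) (auto simp: pvalid_def assms)
  then show ?thesis using assms mp by (simp add: atoms_def And_def)
qed

lemma Conj_imp_member:
  assumes "\<psi> \<in> set (\<phi> # \<phi>s)" "\<forall>\<chi>\<in>set (\<phi> # \<phi>s). wff \<chi>"
  shows "Imp (Conj \<phi> \<phi>s) \<psi> \<in> \<Lambda>"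
  using assms
proof (induction \<phi>s arbitrary: \<phi>)
  case Nil
  then have "\<psi> = \<phi>" "wff \<phi>" by simp_all
  then show ?case using imp_refl by simp
next
  case (Cons \<phi>' \<phi>s)
  have wf_tail: "wff (Conj \<phi>' \<phi>s)" and wf_head: "wff \<phi>"
    using Cons.prems(2) by (simp_all add: wf_Conj)
  show ?case
  proof (cases "\<psi> = \<phi>")
    case True
    then show ?thesis using And_imp_left[OF wf_head wf_tail] by simp
  next
    case False
    then have "\<psi> \<in> set (\<phi>' # \<phi>s)" using Cons.prems(1) by simp
    then have "Imp (Conj \<phi>' \<phi>s) \<psi> \<in> \<Lambda>" using Cons.IH Cons.prems(2) by simp
    moreover have "wff \<psi>" using Cons.prems by blast
    ultimately show ?thesis
      using imp_trans[OF _ wf_tail _ And_imp_right[OF wf_head wf_tail]] wf_head wf_tail by simp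
  qed
qed

lemma imp_ConjI:
  assumes "wff \<chi>" "\<forall>\<psi>\<in>set (\<phi> # \<phi>s). wff \<psi> \<and> Imp \<chi> \<psi> \<in> \<Lambda>"
  shows "Imp \<chi> (Conj \<phi> \<phi>s) \<in> \<Lambda>"
  using assms(2)
proof (induction \<phi>s arbitrary: \<phi>)
  case (Cons \<phi>' \<phi>s)
  then have "Imp \<chi> (Conj \<phi>' \<phi>s) \<in> \<Lambda>" "wff (Conj \<phi>' \<phi>s)" "wff \<phi>" "Imp \<chi> \<phi> \<in> \<Lambda>"
    by (simp_all add: wf_Conj)
  then show ?case using imp_AndI[OF assms(1)] by simp
qed simp

lemma Conj_imp_Conj:
  assumes "set (\<phi> # \<phi>s) \<subseteq> set (\<psi> # \<psi>s)" "\<forall>\<chi>\<in>set (\<psi> # \<psi>s). wff \<chi>"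
  shows "Imp (Conj \<psi> \<psi>s) (Conj \<phi> \<phi>s) \<in> \<Lambda>"
proof (rule imp_ConjI)
  show "wff (Conj \<psi> \<psi>s)" using assms(2) by (simp add: wf_Conj)
  show "\<forall>\<chi>\<in>set (\<phi> # \<phi>s). wff \<chi> \<and> Imp (Conj \<psi> \<psi>s) \<chi> \<in> \<Lambda>"
    using assms Conj_imp_member[of _ \<psi> \<psi>s] by blast
qed

section \<open>Consistency of Henkin extensions\<close>

theorem deduction_theorem:
  assumes "\<forall>\<psi>\<in>\<Delta>. wff \<psi>" "wff \<theta>" "wff \<phi>" "derives \<Lambda> (insert \<theta> \<Delta>) \<phi>"
  shows "derives \<Lambda> \<Delta> (Imp \<theta> \<phi>)"
proof (cases "\<phi> \<in> \<Lambda>")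
  case True
  then show ?thesis using imp_weaken assms(2,3) by (simp add: derives_def)
next
  case False
  then obtain \<psi> \<psi>s where hyps: "set (\<psi> # \<psi>s) \<subseteq> insert \<theta> \<Delta>"
    and derivation: "Imp (Conj \<psi> \<psi>s) \<phi> \<in> \<Lambda>"
    using assms(4) by (auto simp: derives_def)
  have wf_conj: "wff (Conj \<psi> \<psi>s)"
    using hyps assms(1,2) by (auto simp: wf_Conj)
  show ?thesis
  proof (cases "filter (\<lambda>\<chi>. \<chi> \<noteq> \<theta>) (\<psi> # \<psi>s)")
    case Nil
    then have "set (\<psi> # \<psi>s) \<subseteq> set [\<theta>]" unfolding filter_empty_conv by auto
    then have "Imp \<theta> (Conj \<psi> \<psi>s) \<in> \<Lambda>"
      using Conj_imp_Conj[of \<psi> \<psi>s \<theta> "[]"] assms(2) by simp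
    then have "Imp \<theta> \<phi> \<in> \<Lambda>" using imp_trans[OF assms(2) wf_conj assms(3) _ derivation] by simp
    then show ?thesis by (simp add: derives_def)
  next
    case (Cons \<chi> \<chi>s)
    then have rest: "set (\<chi> # \<chi>s) = {\<chi>' \<in> set (\<psi> # \<psi>s). \<chi>' \<noteq> \<theta>}"
      by (metis set_filter)
    then have rest_hyps: "set (\<chi> # \<chi>s) \<subseteq> \<Delta>" using hyps by blast
    then have wf_rest: "wff (Conj \<chi> \<chi>s)" using assms(1) by (auto simp: wf_Conj)
    have "set (\<psi> # \<psi>s) \<subseteq> set (\<theta> # \<chi> # \<chi>s)" using rest by auto
    moreover have "\<forall>\<chi>'\<in>set (\<theta> # \<chi> # \<chi>s). wff \<chi>'" using rest_hyps assms(1,2) by auto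
    ultimately have "Imp (Conj \<theta> (\<chi> # \<chi>s)) (Conj \<psi> \<psi>s) \<in> \<Lambda>" by (rule Conj_imp_Conj)
    then have "Imp (And \<theta> (Conj \<chi> \<chi>s)) \<phi> \<in> \<Lambda>"
      using imp_trans[OF _ wf_conj assms(3) _ derivation] assms(2) wf_rest by simp
    then have "Imp (Conj \<chi> \<chi>s) (Imp \<theta> \<phi>) \<in> \<Lambda>"
      by (rule And_imp_curry[OF assms(2) wf_rest assms(3)])
    then show ?thesis using rest_hyps by (auto simp: derives_def)
  qed
qed

lemma henkin_refutation:
  assumes "wff \<chi>" "wff \<phi>" "wff \<theta>" "y \<notin> fv \<chi>" "y \<notin> vars \<phi>" "y \<noteq> x" "vsort y = vsort x"
    and refutes: "Imp \<chi> (Imp (Imp (subst y x \<phi>) (All x \<phi>)) (And \<theta> (Neg \<theta>))) \<in> \<Lambda>"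
  shows "Imp \<chi> (And (All x \<phi>) (Neg (All x \<phi>))) \<in> \<Lambda>"
proof -
  let ?\<phi>y = "subst y x \<phi>"
  have wf_\<phi>y: "wff ?\<phi>y" and wf_all: "wff (All x \<phi>)" "wff (All y ?\<phi>y)"
    using assms(2,7) by (simp_all add: wf_subst)
  have "Imp \<chi> ?\<phi>y \<in> \<Lambda>"
    by (rule refutes_imp_premise[OF assms(1) wf_\<phi>y wf_all(1) assms(3) refutes])
  then have "Imp \<chi> (All y ?\<phi>y) \<in> \<Lambda>" using assms(4) by (rule gen)
  moreover have "Imp (All y ?\<phi>y) (All x \<phi>) \<in> \<Lambda>"
  proof (rule gen)
    show "Imp (All y ?\<phi>y) \<phi> \<in> \<Lambda>"
      using all_inst[OF wf_\<phi>y, of x y] assms(5-7)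
      by (simp add: subst_subst_inverse free_for_subst_inverse)
    show "x \<notin> fv (All y ?\<phi>y)" using fv_subst_eliminates assms(6) by simp
  qed
  ultimately have "Imp \<chi> (All x \<phi>) \<in> \<Lambda>"
    by (rule imp_trans[OF assms(1) wf_all(2) wf_all(1)])
  moreover have "Imp \<chi> (Neg (All x \<phi>)) \<in> \<Lambda>"
    by (rule refutes_imp_conclusion[OF assms(1) wf_\<phi>y wf_all(1) assms(3) refutes])
  ultimately show ?thesis using wf_all(1) by (intro imp_AndI[OF assms(1)]) simp_all
qed

lemma consistent_insert_henkin:
  assumes "\<forall>\<psi>\<in>\<Delta>. wff \<psi>" "consistent cs fs rs \<Lambda> \<Delta>" "\<forall>\<psi>\<in>\<Delta>. y \<notin> fv \<psi>"
    and "wff \<phi>" "y \<notin> vars \<phi>" "y \<noteq> x" "vsort y = vsort x"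
  shows "consistent cs fs rs \<Lambda> (insert (Imp (subst y x \<phi>) (All x \<phi>)) \<Delta>)"
proof (rule ccontr)
  let ?henkin = "Imp (subst y x \<phi>) (All x \<phi>)"
  let ?contradiction = "And (All x \<phi>) (Neg (All x \<phi>))"
  have wf_henkin: "wff ?henkin" using assms(4,7) by (simp add: wf_subst)
  assume "\<not> ?thesis"
  then obtain \<theta> where wf_\<theta>: "wff \<theta>"
    and "derives \<Lambda> (insert ?henkin \<Delta>) (And \<theta> (Neg \<theta>))"
    unfolding consistent_def by blast
  then have refutes: "derives \<Lambda> \<Delta> (Imp ?henkin (And \<theta> (Neg \<theta>)))"
    using deduction_theorem[OF assms(1) wf_henkin] by simp
  note refutation = henkin_refutation[OF _ assms(4) wf_\<theta> _ assms(5-7)]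
  have "derives \<Lambda> \<Delta> ?contradiction"
  proof (cases "Imp ?henkin (And \<theta> (Neg \<theta>)) \<in> \<Lambda>")
    case True
    let ?top = "Eq (TV x) (TV x)"
    have top: "wff ?top" "?top \<in> \<Lambda>" "y \<notin> fv ?top"
      using eq_refl[of "TV x" "vsort x"] assms(6) by auto
    have "Imp ?top (Imp ?henkin (And \<theta> (Neg \<theta>))) \<in> \<Lambda>"
      using imp_weaken[OF top(1) _ True] wf_henkin wf_\<theta> by simp
    then have "Imp ?top ?contradiction \<in> \<Lambda>" by (rule refutation[OF top(1,3)])
    then show ?thesis using mp top(2) by (simp add: derives_def)
  next
    case False
    then obtain \<psi> \<psi>s where hyps: "set (\<psi> # \<psi>s) \<subseteq> \<Delta>"
      and derivation: "Imp (Conj \<psi> \<psi>s) (Imp ?henkin (And \<theta> (Neg \<theta>))) \<in> \<Lambda>"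
      using refutes by (auto simp: derives_def)
    have "wff (Conj \<psi> \<psi>s)" "y \<notin> fv (Conj \<psi> \<psi>s)"
      using hyps assms(1,3) by (auto simp: wf_Conj fv_Conj)
    then have "Imp (Conj \<psi> \<psi>s) ?contradiction \<in> \<Lambda>" using refutation derivation by blast
    then show ?thesis using hyps by (auto simp: derives_def)
  qed
  then show False using assms(2,4) unfolding consistent_def by simp
qed

end

lemma consistent_UN_mono:
  fixes \<Delta> :: "nat \<Rightarrow> ('c, 'f, 'r) fm set"
  assumes "mono \<Delta>" "\<And>N. consistent cs fs rs \<Lambda> (\<Delta> N)"
  shows "consistent cs fs rs \<Lambda> (\<Union>N. \<Delta> N)"
  unfolding consistent_def
proof (intro allI impI notI)
  fix \<theta> assume wf_\<theta>: "wf cs fs rs \<theta>" and refutes: "derives \<Lambda> (\<Union>N. \<Delta> N) (And \<theta> (Neg \<theta>))"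
  have "\<exists>N. derives \<Lambda> (\<Delta> N) (And \<theta> (Neg \<theta>))"
  proof (cases "And \<theta> (Neg \<theta>) \<in> \<Lambda>")
    case True
    then show ?thesis by (auto simp: derives_def)
  next
    case False
    then obtain \<psi> \<psi>s where hyps: "set (\<psi> # \<psi>s) \<subseteq> (\<Union>N. \<Delta> N)"
      and derivation: "Imp (Conj \<psi> \<psi>s) (And \<theta> (Neg \<theta>)) \<in> \<Lambda>"
      using refutes by (auto simp: derives_def)
    obtain N where "set (\<psi> # \<psi>s) \<subseteq> (\<Union>i<N. \<Delta> i)"
      using finite_countable_subset[OF finite_set hyps] by blast
    also have "\<dots> \<subseteq> \<Delta> N" using monoD[OF assms(1) less_imp_le] by blast
    finally show ?thesis using derivation by (auto simp: derives_def)
  qed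
  then show False using assms(2) wf_\<theta> unfolding consistent_def by blast
qed

section \<open>Henkin witnesses\<close>

fun vindex :: "var \<Rightarrow> nat" where
  "vindex (Var s k) = k"

definition henkin_code :: "('c::countable, 'f::countable, 'r::countable) fm \<Rightarrow> var \<Rightarrow> nat" where
  "henkin_code \<phi> x = prod_encode (to_nat (\<phi>, x), Max (vindex ` insert x (vars \<phi>)))"

definition witness :: "('c::countable, 'f::countable, 'r::countable) fm \<Rightarrow> var \<Rightarrow> var" where
  "witness \<phi> x = Var (vsort x) (Suc (2 * henkin_code \<phi> x))"

definition henkin_axiom ::
  "('c::countable, 'f::countable, 'r::countable) fm \<Rightarrow> var \<Rightarrow> ('c, 'f, 'r) fm" where
  "henkin_axiom \<phi> x = Imp (subst (witness \<phi> x) x \<phi>) (All x \<phi>)"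

lemma henkin_code_inject: "henkin_code \<phi> x = henkin_code \<psi> z \<Longrightarrow> \<phi> = \<psi> \<and> x = z"
  unfolding henkin_code_def using inj_prod_encode[of UNIV] by (auto dest: injD)

lemma vindex_le_henkin_code: "v \<in> insert x (vars \<phi>) \<Longrightarrow> vindex v \<le> henkin_code \<phi> x"
proof -
  assume "v \<in> insert x (vars \<phi>)"
  then have "vindex v \<le> Max (vindex ` insert x (vars \<phi>))" by (intro Max_ge) (auto simp: finite_vars)
  also have "\<dots> \<le> henkin_code \<phi> x" unfolding henkin_code_def by (rule le_prod_encode_2)
  finally show ?thesis .
qed

lemma vsort_witness [simp]: "vsort (witness \<phi> x) = vsort x"
  by (simp add: witness_def)

lemma vindex_witness [simp]: "vindex (witness \<phi> x) = Suc (2 * henkin_code \<phi> x)"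
  by (simp add: witness_def)

lemma witness_fresh: "witness \<phi> x \<notin> insert x (vars \<phi>)"
  using vindex_le_henkin_code[of "witness \<phi> x" x \<phi>] by auto

lemma witness_not_Lvar: "\<not> Lvar (witness \<phi> x)"
  unfolding Lvar_def witness_def by (auto dest: arg_cong[where f = even])

lemma vindex_vars_henkin_axiom:
  "v \<in> vars (henkin_axiom \<phi> x) \<Longrightarrow> vindex v \<le> Suc (2 * henkin_code \<phi> x)"
  using vars_subst_subset[of "witness \<phi> x" x \<phi>] vindex_le_henkin_code[of v x \<phi>]
  by (auto simp: henkin_axiom_def)

context normal_tml
begin

lemma wf_henkin_axiom: "wff \<phi> \<Longrightarrow> wff (henkin_axiom \<phi> x)"
  by (simp add: henkin_axiom_def wf_subst)

definition henkin_stage :: "nat \<Rightarrow> ('c, 'f, 'r) fm set" where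
  "henkin_stage N = {henkin_axiom \<phi> x | \<phi> x. wff \<phi> \<and> henkin_code \<phi> x < N}"

lemma consistent_henkin_stage:
  assumes "\<forall>\<psi>\<in>\<Gamma>. Lfm cs fs rs \<psi>" "consistent cs fs rs \<Lambda> \<Gamma>"
  shows "consistent cs fs rs \<Lambda> (\<Gamma> \<union> henkin_stage N)"
proof (induction N)
  case 0
  then show ?case using assms(2) by (simp add: henkin_stage_def)
next
  case (Suc N)
  show ?case
  proof (cases "\<exists>\<phi> x. wff \<phi> \<and> henkin_code \<phi> x = N")
    case False
    then have "henkin_stage (Suc N) = henkin_stage N"
      by (auto simp: henkin_stage_def less_Suc_eq)
    then show ?thesis using Suc.IH by simp
  next
    case True
    then obtain \<phi> x where wf_\<phi>: "wff \<phi>" and code: "henkin_code \<phi> x = N" by blast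
    then have "henkin_stage (Suc N) = insert (henkin_axiom \<phi> x) (henkin_stage N)"
      by (auto simp: henkin_stage_def less_Suc_eq dest: henkin_code_inject)
    moreover have "consistent cs fs rs \<Lambda> (insert (henkin_axiom \<phi> x) (\<Gamma> \<union> henkin_stage N))"
      unfolding henkin_axiom_def
    proof (rule consistent_insert_henkin[OF _ Suc.IH _ wf_\<phi>])
      show "\<forall>\<psi>\<in>\<Gamma> \<union> henkin_stage N. wff \<psi>"
        using assms(1) by (auto simp: Lfm_def henkin_stage_def wf_henkin_axiom)
      have "witness \<phi> x \<notin> vars \<psi>" if "\<psi> \<in> \<Gamma> \<union> henkin_stage N" for \<psi>
        using that assms(1) witness_not_Lvar vindex_vars_henkin_axiom code
        by (fastforce simp: Lfm_def henkin_stage_def)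
      then show "\<forall>\<psi>\<in>\<Gamma> \<union> henkin_stage N. witness \<phi> x \<notin> fv \<psi>"
        using fv_subset_vars by blast
      show "witness \<phi> x \<notin> vars \<phi>" "witness \<phi> x \<noteq> x" "vsort (witness \<phi> x) = vsort x"
        using witness_fresh by auto
    qed
    ultimately show ?thesis by simp
  qed
qed

end

theorem lemma7p8:
  fixes A :: "'a set"
    and cs :: "'c::countable \<Rightarrow> sort option"
    and fs :: "'f::countable \<Rightarrow> (sort list \<times> sort) option"
    and rs :: "'r::countable \<Rightarrow> sort list option"
    and \<Lambda> \<Gamma> :: "('c, 'f, 'r) fm set"
  assumes "finite A" and "A \<noteq> {}"
    and "\<forall>r as. rs r = Some as \<longrightarrow> as \<noteq> []"
    and "normal_logic (card A) cs fs rs \<Lambda>"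
    and "\<forall>\<phi>\<in>\<Gamma>. Lfm cs fs rs \<phi>"
    and "consistent cs fs rs \<Lambda> \<Gamma>"
  shows "\<exists>\<Gamma>p. (\<forall>\<phi>\<in>\<Gamma>p. wf cs fs rs \<phi>) \<and> consistent cs fs rs \<Lambda> \<Gamma>p
              \<and> forall_property cs fs rs \<Gamma>p \<and> \<Gamma> \<subseteq> \<Gamma>p"
proof -
  \<comment> \<open>Neither the number of agents, which only enters through axiom (N), nor the arity
    condition plays a role in the Henkin extension.\<close>
  interpret normal_tml "card A" cs fs rs \<Lambda> by (rule normal_tml.intro) (fact assms(4))
  define \<Gamma>p where "\<Gamma>p = \<Gamma> \<union> {henkin_axiom \<phi> x | \<phi> x. wf cs fs rs \<phi>}"
  have "\<Gamma>p = (\<Union>N. \<Gamma> \<union> henkin_stage N)"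
    by (auto simp: \<Gamma>p_def henkin_stage_def)
  moreover have "mono (\<lambda>N. \<Gamma> \<union> henkin_stage N)"
    by (rule monoI) (fastforce simp: henkin_stage_def)
  ultimately have "consistent cs fs rs \<Lambda> \<Gamma>p"
    using consistent_UN_mono consistent_henkin_stage[OF assms(5,6)] by metis
  moreover have "\<forall>\<phi>\<in>\<Gamma>p. wf cs fs rs \<phi>"
    using assms(5) by (auto simp: \<Gamma>p_def Lfm_def wf_henkin_axiom)
  moreover have "forall_property cs fs rs \<Gamma>p"
    unfolding forall_property_def
  proof (intro allI impI)
    fix \<phi> x assume "wf cs fs rs \<phi>"
    then have "henkin_axiom \<phi> x \<in> \<Gamma>p" by (auto simp: \<Gamma>p_def)
    then show "\<exists>y. vsort y = vsort x \<and> Imp (subst y x \<phi>) (All x \<phi>) \<in> \<Gamma>p"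
      unfolding henkin_axiom_def by (intro exI[of _ "witness \<phi> x"]) simp
  qed
  ultimately show ?thesis unfolding \<Gamma>p_def by blast
qed

end
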